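(* Let $T:X\to X$ be a continuous map on a Hausdorff topological space, $x\in X$ and $N\in\mathbb{N}$. The following are equivalent: (i) $x$ is periodic for $T$ with period strictly less than $N$ (i.e. $T^px=x$ for some $1\leq p<N$); (ii) for every neighbourhood $U$ of $x$ there is $n_U\in\mathbb{N}_0$ with $\#\big(N(x,U)\cap[n_U+1,n_U+N]\big)\geq2$; (iii) for every neighbourhood $U$ of $x$ there is $1\leq p<N$ with $T^p(U)\cap U\neq\varnothing$.
   Context: $N(x,U)=\{n\in\mathbb{N}_0:T^nx\in U\}$. *)

theory Defs
  imports Complex_Main
begin

definition return_times :: "('a \<Rightarrow> 'a) \<Rightarrow> 'a \<Rightarrow> 'a set \<Rightarrow> nat set" where
  "return_times T x U = {n. (T ^^ n) x \<in> U}"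

definition is_nhd :: "'a::topological_space set \<Rightarrow> 'a \<Rightarrow> bool" where
  "is_nhd U x \<longleftrightarrow> (\<exists>V. open V \<and> x \<in> V \<and> V \<subseteq> U)"

end

theory Submission
  imports Defs
begin

text \<open>
  A periodic point returns at times \<open>p\<close> and \<open>2p\<close>, which fit in one window of length \<open>N\<close>;
  two returns \<open>a < b\<close> to \<open>U\<close> in such a window give \<open>T\<^sup>b\<^sup>-\<^sup>a\<close> mapping the point \<open>T\<^sup>a x \<in> U\<close>
  into \<open>U\<close>. Conversely, if \<open>x\<close> is not fixed by any \<open>T\<^sup>p\<close> with \<open>1 \<le> p < N\<close>, then the
  Hausdorff property and continuity give, for each such \<open>p\<close>, an open \<open>U\<^sub>p \<ni> x\<close> with
  \<open>T\<^sup>p(U\<^sub>p) \<inter> U\<^sub>p = \<emptyset>\<close>, and the finite intersection of the \<open>U\<^sub>p\<close> violates the recurrence condition.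
\<close>

lemma continuous_on_funpow:
  assumes "continuous_on S f" and "f ` S \<subseteq> S"
  shows "continuous_on S (f ^^ n)"
proof (induction n)
  case 0
  then show ?case by simp
next
  case (Suc n)
  have "continuous_on S (f ^^ n \<circ> f)"
    using assms Suc by (intro continuous_on_compose) (auto intro: continuous_on_subset)
  then show ?case by (simp only: funpow_Suc_right)
qed

lemma is_nhd_imp_mem: "is_nhd U x \<Longrightarrow> x \<in> U"
  unfolding is_nhd_def by blast

lemma open_is_nhd: "open U \<Longrightarrow> x \<in> U \<Longrightarrow> is_nhd U x"
  unfolding is_nhd_def by blast

lemma funpow_mult_fixpoint:
  assumes "(f ^^ p) x = x"
  shows "(f ^^ (k * p)) x = x"
  by (induction k) (simp_all add: funpow_add assms)

lemma exists_open_disjoint_image: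
  fixes f :: "'a::t2_space \<Rightarrow> 'a"
  assumes "continuous_on UNIV f" and "f x \<noteq> x"
  shows "\<exists>U. open U \<and> x \<in> U \<and> f ` U \<inter> U = {}"
proof -
  obtain V W where VW: "open V" "open W" "x \<in> V" "f x \<in> W" "V \<inter> W = {}"
    using hausdorff assms(2) by metis
  have "open (f -` W)"
    using assms(1) VW(2) continuous_on_open_vimage[of UNIV f] by auto
  then show ?thesis
    using VW by (intro exI[of _ "V \<inter> f -` W"]) auto
qed

lemma exists_open_disjoint_images:
  fixes f :: "'i \<Rightarrow> 'a::t2_space \<Rightarrow> 'a"
  assumes "finite I" and "\<And>i. i \<in> I \<Longrightarrow> continuous_on UNIV (f i)"
    and "\<And>i. i \<in> I \<Longrightarrow> f i x \<noteq> x"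
  shows "\<exists>U. open U \<and> x \<in> U \<and> (\<forall>i\<in>I. f i ` U \<inter> U = {})"
proof -
  have "\<forall>i\<in>I. \<exists>V. open V \<and> x \<in> V \<and> f i ` V \<inter> V = {}"
    using exists_open_disjoint_image assms(2,3) by blast
  then obtain V where V: "\<And>i. i \<in> I \<Longrightarrow> open (V i) \<and> x \<in> V i \<and> f i ` V i \<inter> V i = {}"
    by metis
  have "open (\<Inter>i\<in>I. V i)"
    using assms(1) V by (intro open_INT) auto
  then show ?thesis
    using V by (intro exI[of _ "\<Inter>i\<in>I. V i"]) blast
qed

lemma two_le_card_window_imp_close_pair:
  fixes S :: "nat set"
  assumes "2 \<le> card (S \<inter> {n + 1 .. n + N})"
  shows "\<exists>a\<in>S. \<exists>b\<in>S. a < b \<and> b < a + N"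
proof -
  obtain a b where ab: "a \<in> S \<inter> {n + 1 .. n + N}" "b \<in> S \<inter> {n + 1 .. n + N}" "a \<noteq> b"
    using assms by (metis card_le_Suc_iff numeral_2_eq_2 insert_iff)
  then show ?thesis
    by (cases a b rule: linorder_cases) (fastforce simp: less_Suc_eq_le)+
qed

lemma periodic_imp_two_returns_in_window:
  assumes "1 \<le> p" "p < N" "(T ^^ p) x = x" and "x \<in> U"
  shows "2 \<le> card (return_times T x U \<inter> {(p - 1) + 1 .. (p - 1) + N})"
proof -
  have "(T ^^ (2 * p)) x = x"
    using funpow_mult_fixpoint[OF assms(3), of 2] .
  then have "{p, 2 * p} \<subseteq> return_times T x U \<inter> {(p - 1) + 1 .. (p - 1) + N}"
    using assms
    by (auto simp: return_times_def)
  moreover have "card {p, 2 * p} = 2"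
    using assms(1) by simp
  ultimately show ?thesis
    by (metis card_mono finite_Int finite_atLeastAtMost)
qed

lemma two_returns_in_window_imp_recurrent:
  assumes "2 \<le> card (return_times T x U \<inter> {n + 1 .. n + N})"
  shows "\<exists>p. 1 \<le> p \<and> p < N \<and> (T ^^ p) ` U \<inter> U \<noteq> {}"
proof -
  obtain a b where ab: "a < b" "b < a + N" "(T ^^ a) x \<in> U" "(T ^^ b) x \<in> U"
    using two_le_card_window_imp_close_pair[OF assms] by (auto simp: return_times_def)
  have "(T ^^ b) x = (T ^^ (b - a)) ((T ^^ a) x)"
    using ab(1) by (metis funpow_add le_add_diff_inverse2 less_imp_le o_apply)
  then have "(T ^^ b) x \<in> (T ^^ (b - a)) ` U \<inter> U"
    using ab(3,4) by blast
  then show ?thesis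
    using ab(1,2) by (intro exI[of _ "b - a"]) auto
qed

lemma recurrent_imp_periodic:
  fixes T :: "'a::t2_space \<Rightarrow> 'a"
  assumes "continuous_on UNIV T"
    and "\<And>U. is_nhd U x \<Longrightarrow> \<exists>p. 1 \<le> p \<and> p < N \<and> (T ^^ p) ` U \<inter> U \<noteq> {}"
  shows "\<exists>p. 1 \<le> p \<and> p < N \<and> (T ^^ p) x = x"
proof (rule ccontr)
  assume "\<nexists>p. 1 \<le> p \<and> p < N \<and> (T ^^ p) x = x"
  then obtain U where U: "open U" "x \<in> U" "\<forall>p\<in>{1..<N}. (T ^^ p) ` U \<inter> U = {}"
    using exists_open_disjoint_images[of "{1..<N}" "\<lambda>p. T ^^ p" x]
      continuous_on_funpow[OF assms(1)] by auto
  then show False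
    using assms(2)[OF open_is_nhd[OF U(1,2)]] by fastforce
qed

theorem mainTheorem10:
  fixes T :: "'a::t2_space \<Rightarrow> 'a" and x :: 'a and N :: nat
  assumes "continuous_on UNIV T" and "N \<ge> 1"
  shows "((\<exists>p. 1 \<le> p \<and> p < N \<and> (T ^^ p) x = x)
          \<longleftrightarrow> (\<forall>U. is_nhd U x \<longrightarrow>
                 (\<exists>nU::nat. card (return_times T x U \<inter> {nU + 1 .. nU + N}) \<ge> 2)))
       \<and> ((\<exists>p. 1 \<le> p \<and> p < N \<and> (T ^^ p) x = x)
          \<longleftrightarrow> (\<forall>U. is_nhd U x \<longrightarrow>
                 (\<exists>p. 1 \<le> p \<and> p < N \<and> (T ^^ p) ` U \<inter> U \<noteq> {})))"
    (is "(?periodic \<longleftrightarrow> ?returns) \<and> (?periodic \<longleftrightarrow> ?recurrent)")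
proof -
  have "?periodic \<Longrightarrow> ?returns"
  proof (intro allI impI)
    fix U assume "?periodic" and "is_nhd U x"
    then show "\<exists>nU. 2 \<le> card (return_times T x U \<inter> {nU + 1 .. nU + N})"
      using periodic_imp_two_returns_in_window is_nhd_imp_mem by metis
  qed
  moreover have "?returns \<Longrightarrow> ?recurrent"
    using two_returns_in_window_imp_recurrent by metis
  moreover have "?recurrent \<Longrightarrow> ?periodic"
    using recurrent_imp_periodic[OF assms(1)] by metis
  ultimately show ?thesis by argo
qed

end
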